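(* Let $n\ge 1$ and let $\mathcal{C}$ be a clique partition of the complete graph $K_n$ all of whose cliques have at most $n-1$ vertices. Then $\sum_{C\in\mathcal{C}}|C|\ge 3n-3$.
   Context: A clique in a graph $G$ is a set of pairwise adjacent vertices. A clique partition of $G$ is a family $\mathcal{C}$ of cliques of $G$ such that every edge of $G$ has both endpoints in exactly one member of $\mathcal{C}$. *)

theory Defs
  imports Main
begin

text \<open>Simple graphs given by a vertex set V and a symmetric irreflexive
 adjacency relation E.\<close>

definition is_clique :: "'a set \<Rightarrow> ('a \<Rightarrow> 'a \<Rightarrow> bool) \<Rightarrow> 'a set \<Rightarrow> bool" where
  "is_clique V E C \<longleftrightarrow> C \<subseteq> V \<and> (\<forall>u\<in>C. \<forall>v\<in>C. u \<noteq> v \<longrightarrow> E u v)"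

definition is_clique_partition ::
  "'a set \<Rightarrow> ('a \<Rightarrow> 'a \<Rightarrow> bool) \<Rightarrow> 'a set set \<Rightarrow> bool" where
  "is_clique_partition V E \<C> \<longleftrightarrow>
     (\<forall>C\<in>\<C>. is_clique V E C) \<and>
     (\<forall>u\<in>V. \<forall>v\<in>V. u \<noteq> v \<longrightarrow> E u v \<longrightarrow> (\<exists>!C. C \<in> \<C> \<and> u \<in> C \<and> v \<in> C))"

definition Kn_vertices :: "nat \<Rightarrow> nat set" where
  "Kn_vertices n = {0..<n}"

definition Kn_adj :: "nat \<Rightarrow> nat \<Rightarrow> bool" where
  "Kn_adj u v \<longleftrightarrow> u \<noteq> v"

end

theory Submission
  imports Defs
begin

text \<open>Count each clique once at every one of its vertices: the total size of the partition is the
sum over the vertices v of the clique degree r(v), the number of cliques through v. A clique through v meets the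
neighbourhood of v in at most one vertex of any set of neighbours that pairwise share no clique
with v, so r(v) is at least the size of such a set. If all cliques are edges, this gives
r(v) \<ge> n - 1 everywhere. Otherwise take a clique L with k \<ge> 3 vertices: a vertex outside L
sees the k vertices of L in pairwise different cliques, so r(v) \<ge> k, and a vertex of L lies in
L and in the clique joining it to some vertex outside L, so r(v) \<ge> 2. Hence the total is at
least 2k + (n - k) k, which exceeds 3n - 3 by (n - k - 1)(k - 3).\<close>

definition clique_degree :: "'a set set \<Rightarrow> 'a \<Rightarrow> nat" where
  "clique_degree \<C> v = card {C\<in>\<C>. v \<in> C}"

lemma clique_partition_subset:
  assumes "is_clique_partition V E \<C>" "C \<in> \<C>"
  shows "C \<subseteq> V"
  using assms unfolding is_clique_partition_def is_clique_def by blast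

lemma clique_partition_finite:
  assumes "is_clique_partition V E \<C>" "finite V"
  shows "finite \<C>"
  using assms by (intro finite_subset[of \<C> "Pow V"]) (auto dest: clique_partition_subset)

lemma clique_partition_unique:
  assumes P: "is_clique_partition V E \<C>"
    and "C \<in> \<C>" "D \<in> \<C>" "u \<in> C" "w \<in> C" "u \<in> D" "w \<in> D" "u \<noteq> w"
  shows "C = D"
proof -
  have "is_clique V E C" using P \<open>C \<in> \<C>\<close> unfolding is_clique_partition_def by blast
  then have "u \<in> V" "w \<in> V" "E u w" using assms(4,5,8) unfolding is_clique_def by auto
  then show ?thesis using P assms(2-8) unfolding is_clique_partition_def by blast
qed

lemma sum_card_eq_sum_clique_degree:
  assumes "is_clique_partition V E \<C>" "finite V"
  shows "(\<Sum>C\<in>\<C>. card C) = (\<Sum>v\<in>V. clique_degree \<C> v)"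
proof -
  have "\<forall>C\<in>\<C>. card {v\<in>V. v \<in> C} = card C"
    using assms(1) by (auto dest: clique_partition_subset intro: arg_cong[where f = card])
  then show ?thesis
    unfolding clique_degree_def
    by (intro sum_multicount_gen[OF assms(2) clique_partition_finite[OF assms], symmetric])
qed

lemma card_le_clique_degree:
  assumes P: "is_clique_partition V E \<C>" and "finite \<C>"
    and "v \<in> V" "U \<subseteq> V" "v \<notin> U" "\<forall>u\<in>U. E v u"
    and separated: "\<forall>C\<in>\<C>. v \<in> C \<longrightarrow> (\<forall>a\<in>U. \<forall>b\<in>U. a \<in> C \<longrightarrow> b \<in> C \<longrightarrow> a = b)"
  shows "card U \<le> clique_degree \<C> v"
proof -
  define f where "f u = (THE C. C \<in> \<C> \<and> v \<in> C \<and> u \<in> C)" for u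
  have unique: "\<exists>!C. C \<in> \<C> \<and> v \<in> C \<and> u \<in> C" if "u \<in> U" for u
  proof -
    have "u \<in> V" "v \<noteq> u" "E v u" using assms(4-6) that by auto
    then show ?thesis using P \<open>v \<in> V\<close> unfolding is_clique_partition_def by simp
  qed
  have f: "f u \<in> \<C> \<and> v \<in> f u \<and> u \<in> f u" if "u \<in> U" for u
    unfolding f_def by (rule theI'[OF unique[OF that]])
  have "inj_on f U"
    by (rule inj_onI) (metis f separated)
  moreover have "f ` U \<subseteq> {C\<in>\<C>. v \<in> C}" using f by blast
  ultimately show ?thesis
    unfolding clique_degree_def using card_inj_on_le \<open>finite \<C>\<close> by fastforce
qed

lemma complete_partition_has_edge:
  assumes P: "is_clique_partition V Kn_adj \<C>" "finite V" and "2 \<le> card V"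
  obtains C where "C \<in> \<C>" "2 \<le> card C"
proof -
  obtain u w where "u \<in> V" "w \<in> V" "u \<noteq> w"
    using \<open>2 \<le> card V\<close> card_le_Suc0_iff_eq[OF P(2)] by fastforce
  then obtain C where C: "C \<in> \<C>" "u \<in> C" "w \<in> C"
    using P(1) unfolding is_clique_partition_def Kn_adj_def by blast
  have "card {u, w} \<le> card C"
    using C clique_partition_subset[OF P(1)] P(2) by (intro card_mono) (auto intro: finite_subset)
  with C \<open>u \<noteq> w\<close> show ?thesis using that by simp
qed

lemma clique_degree_outside_clique:
  assumes P: "is_clique_partition V Kn_adj \<C>" "finite V"
    and "L \<in> \<C>" "v \<in> V - L"
  shows "card L \<le> clique_degree \<C> v"
proof (rule card_le_clique_degree[OF P(1) clique_partition_finite[OF P]])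
  show "\<forall>C\<in>\<C>. v \<in> C \<longrightarrow> (\<forall>a\<in>L. \<forall>b\<in>L. a \<in> C \<longrightarrow> b \<in> C \<longrightarrow> a = b)"
    using clique_partition_unique[OF P(1) _ \<open>L \<in> \<C>\<close>] \<open>v \<in> V - L\<close> by blast
qed (use assms clique_partition_subset[OF P(1)] in \<open>auto simp: Kn_adj_def\<close>)

lemma clique_degree_inside_proper_clique:
  assumes P: "is_clique_partition V Kn_adj \<C>" "finite V"
    and "L \<in> \<C>" "L \<noteq> V" "2 \<le> card L" "v \<in> L"
  shows "2 \<le> clique_degree \<C> v"
proof -
  have LV: "L \<subseteq> V" using clique_partition_subset[OF P(1) \<open>L \<in> \<C>\<close>] .
  obtain w where w: "w \<in> V" "w \<notin> L" using LV \<open>L \<noteq> V\<close> by blast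
  have "\<not> L \<subseteq> {v}" using \<open>2 \<le> card L\<close> card_mono[of "{v}" L] by fastforce
  then obtain u where u: "u \<in> L" "u \<noteq> v" by blast
  have "card {u, w} \<le> clique_degree \<C> v"
  proof (rule card_le_clique_degree[OF P(1) clique_partition_finite[OF P]])
    show "\<forall>C\<in>\<C>. v \<in> C \<longrightarrow> (\<forall>a\<in>{u, w}. \<forall>b\<in>{u, w}. a \<in> C \<longrightarrow> b \<in> C \<longrightarrow> a = b)"
      using clique_partition_unique[OF P(1) _ \<open>L \<in> \<C>\<close>] u w \<open>v \<in> L\<close> by blast
  qed (use LV u w \<open>v \<in> L\<close> in \<open>auto simp: Kn_adj_def\<close>)
  moreover have "u \<noteq> w" using u w by blast
  ultimately show ?thesis by simp
qed

lemma clique_degree_edge_partition: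
  assumes P: "is_clique_partition V Kn_adj \<C>" "finite V"
    and edges: "\<forall>C\<in>\<C>. card C \<le> 2" and "v \<in> V"
  shows "card V - 1 \<le> clique_degree \<C> v"
proof -
  have "card (V - {v}) \<le> clique_degree \<C> v"
  proof (rule card_le_clique_degree[OF P(1) clique_partition_finite[OF P] \<open>v \<in> V\<close>])
    show "\<forall>C\<in>\<C>. v \<in> C \<longrightarrow> (\<forall>a\<in>V - {v}. \<forall>b\<in>V - {v}. a \<in> C \<longrightarrow> b \<in> C \<longrightarrow> a = b)"
    proof (intro ballI impI, rule ccontr)
      fix C a b assume "C \<in> \<C>" "v \<in> C" "a \<in> V - {v}" "b \<in> V - {v}" "a \<in> C" "b \<in> C" "a \<noteq> b"
      moreover have "finite C"
        using clique_partition_subset[OF P(1) \<open>C \<in> \<C>\<close>] P(2) finite_subset by blast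
      ultimately have "card {v, a, b} \<le> card C" by (intro card_mono) auto
      then show False using edges \<open>C \<in> \<C>\<close> \<open>a \<in> V - {v}\<close> \<open>b \<in> V - {v}\<close> \<open>a \<noteq> b\<close> by auto
    qed
  qed (auto simp: Kn_adj_def)
  then show ?thesis using \<open>v \<in> V\<close> P(2) by simp
qed

lemma sum_card_ge_proper_clique:
  assumes P: "is_clique_partition V Kn_adj \<C>" "finite V"
    and "L \<in> \<C>" "L \<noteq> V" "2 \<le> card L"
  shows "2 * card L + (card V - card L) * card L \<le> (\<Sum>C\<in>\<C>. card C)"
proof -
  have LV: "L \<subseteq> V" using clique_partition_subset[OF P(1) \<open>L \<in> \<C>\<close>] .
  have "2 * card L = (\<Sum>v\<in>L. 2)" by simp
  also have "\<dots> \<le> (\<Sum>v\<in>L. clique_degree \<C> v)"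
    using clique_degree_inside_proper_clique[OF P assms(3-5)] by (intro sum_mono) auto
  finally have inside: "2 * card L \<le> (\<Sum>v\<in>L. clique_degree \<C> v)" .
  have "(card V - card L) * card L = (\<Sum>v\<in>V - L. card L)"
    using LV P(2) by (simp add: card_Diff_subset finite_subset)
  also have "\<dots> \<le> (\<Sum>v\<in>V - L. clique_degree \<C> v)"
    using clique_degree_outside_clique[OF P \<open>L \<in> \<C>\<close>] by (intro sum_mono) auto
  finally have outside: "(card V - card L) * card L \<le> (\<Sum>v\<in>V - L. clique_degree \<C> v)" .
  have "(\<Sum>v\<in>V. clique_degree \<C> v)
      = (\<Sum>v\<in>L. clique_degree \<C> v) + (\<Sum>v\<in>V - L. clique_degree \<C> v)"
    using sum.subset_diff[OF LV P(2)] by (simp add: add.commute)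
  with inside outside show ?thesis
    unfolding sum_card_eq_sum_clique_degree[OF P] by linarith
qed

lemma sum_card_edge_partition:
  assumes P: "is_clique_partition V Kn_adj \<C>" "finite V"
    and "\<forall>C\<in>\<C>. card C \<le> 2"
  shows "card V * (card V - 1) \<le> (\<Sum>C\<in>\<C>. card C)"
proof -
  have "card V * (card V - 1) = (\<Sum>v\<in>V. card V - 1)" by simp
  also have "\<dots> \<le> (\<Sum>v\<in>V. clique_degree \<C> v)"
    using clique_degree_edge_partition[OF P assms(3)] by (intro sum_mono) auto
  finally show ?thesis unfolding sum_card_eq_sum_clique_degree[OF P] .
qed

lemma three_mul_le_proper_clique_bound:
  fixes n k :: nat
  assumes "3 \<le> k" "k < n"
  shows "3 * n - 3 \<le> 2 * k + (n - k) * k"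
proof -
  obtain a where a: "k = 3 + a" using assms(1) le_Suc_ex by blast
  obtain b where "n = 4 + a + b" using assms(2) a by (intro that[of "n - 4 - a"]) simp
  then show ?thesis using a by (simp add: algebra_simps)
qed

theorem mainTheorem2:
  fixes n :: nat and \<C> :: "nat set set"
  assumes "n \<ge> 1"
    and "is_clique_partition (Kn_vertices n) Kn_adj \<C>"
    and "\<forall>C\<in>\<C>. card C \<le> n - 1"
  shows "(\<Sum>C\<in>\<C>. card C) \<ge> 3 * n - 3"
proof -
  have P: "is_clique_partition {0..<n} Kn_adj \<C>" "finite {0..<n}"
    using assms(2) by (simp_all add: Kn_vertices_def)
  show ?thesis
  proof (cases "\<exists>L\<in>\<C>. 3 \<le> card L")
    case True
    then obtain L where "L \<in> \<C>" "3 \<le> card L" by blast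
    moreover have "card L < n" using assms(1,3) \<open>L \<in> \<C>\<close> by fastforce
    ultimately show ?thesis
      using sum_card_ge_proper_clique[OF P \<open>L \<in> \<C>\<close>] three_mul_le_proper_clique_bound by fastforce
  next
    case False
    have "n \<noteq> 2"
      using complete_partition_has_edge[OF P] assms(3) by fastforce
    have "3 * n - 3 \<le> n * (n - 1)"
    proof (cases "n = 1")
      case False
      then have "3 \<le> n" using assms(1) \<open>n \<noteq> 2\<close> by linarith
      then show ?thesis using mult_le_mono1[of 3 n "n - 1"] by (simp add: diff_mult_distrib2)
    qed simp
    also have "\<dots> \<le> (\<Sum>C\<in>\<C>. card C)" using sum_card_edge_partition[OF P] False by fastforce
    finally show ?thesis .
  qed
qed

end
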